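(* Let $0<\alpha<1$, $0<\tau_1<\tau_2$, and let $\Lambda\subset\mathbb{R}^n$ be a closed set of Lebesgue measure zero. Let $f\in L_{2\alpha}(\mathbb{R}^n)\cap C^\infty(\mathbb{R}^n\setminus\Lambda)\cap L^{\tau_2}_{loc}(\mathbb{R}^n)$ satisfy: there exist $K>0$, $q>0$ such that $K^{-1}d_0(y,\Lambda)^{-q}\leq f(y)\leq Kd_0(y,\Lambda)^{-q}$ for all $y\in\mathbb{R}^n\setminus\Lambda$. Then for every $x\in\mathbb{R}^n\setminus\Lambda$, $$\big((-\Delta)^\alpha f^{\tau_1}\big)(x)\geq\frac{\tau_1}{\tau_2}f^{\tau_1-\tau_2}(x)\big((-\Delta)^\alpha f^{\tau_2}\big)(x).$$
   Context: $d_0$ is the Euclidean distance. $L_{2\alpha}(\mathbb{R}^n)=\{h:\int_{\mathbb{R}^n}\frac{|h(x)|}{1+|x|^{n+2\alpha}}dx<\infty\}$. The fractional Laplacian is $(-\Delta)^\alpha h(x)=-d_{n,\alpha}\int_{\mathbb{R}^n}\frac{h(x+y)+h(x-y)-2h(x)}{|y|^{n+2\alpha}}dy$ for $h\in L_{2\alpha}(\mathbb{R}^n)$, with $d_{n,\alpha}>0$ the normalizing constant making the Fourier symbol $|\xi|^{2\alpha}$. *)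

theory Defs
  imports "HOL-Analysis.Analysis"
begin

fun Ck_on :: "nat \<Rightarrow> 'a::euclidean_space set \<Rightarrow> ('a \<Rightarrow> real) \<Rightarrow> bool" where
  "Ck_on 0 S f = continuous_on S f"
| "Ck_on (Suc k) S f = (f differentiable_on S \<and>
      (\<forall>v. Ck_on k S (\<lambda>x. frechet_derivative f (at x) v)))"

definition smooth_on :: "'a::euclidean_space set \<Rightarrow> ('a \<Rightarrow> real) \<Rightarrow> bool" where
  "smooth_on S f \<longleftrightarrow> (\<forall>k. Ck_on k S f)"

definition L2alpha :: "real \<Rightarrow> ('a::euclidean_space \<Rightarrow> real) set" where
  "L2alpha \<alpha> = {h. h \<in> borel_measurable lborel \<and>
      integrable lborel (\<lambda>x. \<bar>h x\<bar> / (1 + norm x powr (real DIM('a) + 2 * \<alpha>)))}"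

definition Lloc :: "real \<Rightarrow> ('a::euclidean_space \<Rightarrow> real) set" where
  "Lloc p = {h. h \<in> borel_measurable lborel \<and>
      (\<forall>C. compact C \<longrightarrow> set_integrable lborel C (\<lambda>x. \<bar>h x\<bar> powr p))}"

text \<open>Normalising constant d_{n,alpha} making the Fourier symbol |xi|^(2 alpha)
  for the second-difference form: d = 2^(2a-1) a Gamma(n/2+a) / (pi^(n/2) Gamma(1-a)).\<close>
definition frac_const :: "nat \<Rightarrow> real \<Rightarrow> real" where
  "frac_const n \<alpha> = 2 powr (2 * \<alpha> - 1) * \<alpha> * Gamma (real n / 2 + \<alpha>)
      / (pi powr (real n / 2) * Gamma (1 - \<alpha>))"

definition frac_integrand :: "real \<Rightarrow> ('a::euclidean_space \<Rightarrow> real) \<Rightarrow> 'a \<Rightarrow> 'a \<Rightarrow> real" where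
  "frac_integrand \<alpha> h x y = (h (x + y) + h (x - y) - 2 * h x) / norm y powr (real DIM('a) + 2 * \<alpha>)"

text \<open>Fractional Laplacian at x, as an extended real: the integral is taken as
  (integral of positive part) - (integral of negative part) in [-oo, oo]; for
  absolutely convergent integrals this is the usual Lebesgue integral.\<close>
definition frac_lap :: "real \<Rightarrow> ('a::euclidean_space \<Rightarrow> real) \<Rightarrow> 'a \<Rightarrow> ereal" where
  "frac_lap \<alpha> h x = - ereal (frac_const DIM('a) \<alpha>) *
     (enn2ereal (\<integral>\<^sup>+ y. ennreal (frac_integrand \<alpha> h x y) \<partial>lborel)
      - enn2ereal (\<integral>\<^sup>+ y. ennreal (- frac_integrand \<alpha> h x y) \<partial>lborel))"

end

theory Submission imports Defs begin

text \<open>Since \<open>t \<mapsto> t powr (\<tau>\<^sub>1/\<tau>\<^sub>2)\<close> is concave, \<open>f(z) powr \<tau>\<^sub>1\<close> lies below the tangent line of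
  \<open>f(z) powr \<tau>\<^sub>2\<close> at \<open>f(x)\<close>; the second differences in the integrand of \<open>(-\<Delta>)\<^sup>\<alpha>\<close>
  inherit this bound pointwise, and the constant term of the tangent cancels in them.
  Integrating over \<open>y\<close> and multiplying by \<open>-d\<^sub>n\<^sub>,\<^sub>\<alpha> \<le> 0\<close> reverses the inequality.\<close>

lemma powr_le_tangent:
  fixes s A t :: real
  assumes "0 < s" "s < 1" "0 < A" "0 \<le> t"
  shows "t powr s \<le> A powr s + s * A powr (s - 1) * (t - A)"
proof (cases "t = 0")
  case True
  have "A powr (s - 1) * A = A powr s"
    using assms by (simp add: powr_diff)
  then show ?thesis
    using True assms by (simp add: algebra_simps)
next
  case False
  then have "t powr s * A powr (1 - s) \<le> s * t + (1 - s) * A"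
    using Youngs_inequality_0[of s "1 - s" t A] assms by simp
  then have "A powr (s - 1) * (t powr s * A powr (1 - s))
      \<le> A powr (s - 1) * (s * t + (1 - s) * A)"
    by (simp add: mult_left_mono)
  moreover have "A powr (s - 1) * (t powr s * A powr (1 - s)) = t powr s"
    using assms by (simp add: mult.left_commute powr_add[symmetric])
  moreover have "A powr (s - 1) * (s * t + (1 - s) * A) = A powr s + s * A powr (s - 1) * (t - A)"
    using assms by (simp add: algebra_simps powr_mult_base)
  ultimately show ?thesis
    by linarith
qed

lemma powr_le_tangent_powr:
  fixes a b \<tau>1 \<tau>2 :: real
  assumes "0 < \<tau>1" "\<tau>1 < \<tau>2" "0 < a"
  shows "b powr \<tau>1 \<le> a powr \<tau>1 + \<tau>1 / \<tau>2 * a powr (\<tau>1 - \<tau>2) * (b powr \<tau>2 - a powr \<tau>2)"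
proof -
  define s where "s = \<tau>1 / \<tau>2"
  have s: "0 < s" "s < 1"
    using assms by (auto simp: s_def)
  have "b powr \<tau>1 = (b powr \<tau>2) powr s" "a powr \<tau>1 = (a powr \<tau>2) powr s"
    "a powr (\<tau>1 - \<tau>2) = (a powr \<tau>2) powr (s - 1)"
    using assms by (simp_all add: powr_powr s_def algebra_simps diff_divide_distrib)
  then show ?thesis
    using powr_le_tangent[OF s, of "a powr \<tau>2" "b powr \<tau>2"] assms by (simp add: s_def)
qed

lemma frac_integrand_powr_le:
  fixes f :: "'a::euclidean_space \<Rightarrow> real"
  assumes "0 < \<tau>1" "\<tau>1 < \<tau>2" "0 < f x"
  shows "frac_integrand \<alpha> (\<lambda>y. f y powr \<tau>1) x y
    \<le> \<tau>1 / \<tau>2 * f x powr (\<tau>1 - \<tau>2) * frac_integrand \<alpha> (\<lambda>y. f y powr \<tau>2) x y"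
proof -
  define c where "c = \<tau>1 / \<tau>2 * f x powr (\<tau>1 - \<tau>2)"
  have tangent: "f z powr \<tau>1 \<le> f x powr \<tau>1 + c * (f z powr \<tau>2 - f x powr \<tau>2)" for z
    using powr_le_tangent_powr[OF assms, of "f z"] by (simp add: c_def)
  have "f (x + y) powr \<tau>1 + f (x - y) powr \<tau>1 - 2 * f x powr \<tau>1
      \<le> c * (f (x + y) powr \<tau>2 + f (x - y) powr \<tau>2 - 2 * f x powr \<tau>2)"
    using tangent[of "x + y"] tangent[of "x - y"] by (simp add: algebra_simps)
  then show ?thesis
    unfolding frac_integrand_def c_def[symmetric] times_divide_eq_right[symmetric]
    by (simp add: divide_right_mono)
qed

lemma ereal_diff_le_cmult_diff:
  fixes P1 N1 P2 N2 :: ereal and c :: real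
  assumes "0 \<le> c" "0 \<le> P1" "0 \<le> N1" "0 \<le> P2" "0 \<le> N2"
    and "P1 \<le> ereal c * P2" "ereal c * N2 \<le> N1"
  shows "P1 - N1 \<le> ereal c * (P2 - N2)"
  using assms by (cases P1; cases N1; cases P2; cases N2) (auto simp: algebra_simps split: if_splits)

lemma nn_integral_pos_neg_le_cmult:
  fixes u v :: "'b \<Rightarrow> real"
  assumes "0 \<le> c" "v \<in> borel_measurable M" "\<And>y. u y \<le> c * v y"
  shows "enn2ereal (\<integral>\<^sup>+ y. ennreal (u y) \<partial>M) - enn2ereal (\<integral>\<^sup>+ y. ennreal (- u y) \<partial>M)
    \<le> ereal c * (enn2ereal (\<integral>\<^sup>+ y. ennreal (v y) \<partial>M) - enn2ereal (\<integral>\<^sup>+ y. ennreal (- v y) \<partial>M))"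
proof (rule ereal_diff_le_cmult_diff[OF \<open>0 \<le> c\<close>])
  have pos: "(\<integral>\<^sup>+ y. ennreal (u y) \<partial>M) \<le> ennreal c * (\<integral>\<^sup>+ y. ennreal (v y) \<partial>M)"
  proof -
    have "(\<integral>\<^sup>+ y. ennreal (u y) \<partial>M) \<le> (\<integral>\<^sup>+ y. ennreal c * ennreal (v y) \<partial>M)"
      using assms by (intro nn_integral_mono) (simp add: ennreal_leI flip: ennreal_mult')
    also have "\<dots> = ennreal c * (\<integral>\<^sup>+ y. ennreal (v y) \<partial>M)"
      using assms(2) by (intro nn_integral_cmult) measurable
    finally show ?thesis .
  qed
  have neg: "ennreal c * (\<integral>\<^sup>+ y. ennreal (- v y) \<partial>M) \<le> (\<integral>\<^sup>+ y. ennreal (- u y) \<partial>M)"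
  proof -
    have "ennreal c * (\<integral>\<^sup>+ y. ennreal (- v y) \<partial>M) = (\<integral>\<^sup>+ y. ennreal c * ennreal (- v y) \<partial>M)"
      using assms(2) by (intro nn_integral_cmult[symmetric]) measurable
    also have "\<dots> \<le> (\<integral>\<^sup>+ y. ennreal (- u y) \<partial>M)"
      using assms by (intro nn_integral_mono) (simp add: ennreal_leI flip: ennreal_mult')
    finally show ?thesis .
  qed
  have c: "enn2ereal (ennreal c) = ereal c"
    using assms(1) by simp
  show "enn2ereal (\<integral>\<^sup>+ y. ennreal (u y) \<partial>M) \<le> ereal c * enn2ereal (\<integral>\<^sup>+ y. ennreal (v y) \<partial>M)"
    using pos by (metis c less_eq_ennreal.rep_eq times_ennreal.rep_eq)
  show "ereal c * enn2ereal (\<integral>\<^sup>+ y. ennreal (- v y) \<partial>M) \<le> enn2ereal (\<integral>\<^sup>+ y. ennreal (- u y) \<partial>M)"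
    using neg by (metis c less_eq_ennreal.rep_eq times_ennreal.rep_eq)
qed (simp_all add: enn2ereal_nonneg)

lemma frac_const_nonneg:
  assumes "0 < \<alpha>" "\<alpha> < 1"
  shows "0 \<le> frac_const n \<alpha>"
  unfolding frac_const_def using assms
  by (intro divide_nonneg_pos mult_nonneg_nonneg mult_pos_pos Gamma_real_pos) auto

lemma frac_lap_ge_cmult:
  fixes g h :: "'a::euclidean_space \<Rightarrow> real"
  assumes "0 < \<alpha>" "\<alpha> < 1" "0 \<le> c"
    and "frac_integrand \<alpha> h x \<in> borel_measurable lborel"
    and "\<And>y. frac_integrand \<alpha> g x y \<le> c * frac_integrand \<alpha> h x y"
  shows "ereal c * frac_lap \<alpha> h x \<le> frac_lap \<alpha> g x"
proof -
  define d where "d = frac_const DIM('a) \<alpha>"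
  define I where "I k = enn2ereal (\<integral>\<^sup>+ y. ennreal (frac_integrand \<alpha> k x y) \<partial>lborel)
    - enn2ereal (\<integral>\<^sup>+ y. ennreal (- frac_integrand \<alpha> k x y) \<partial>lborel)" for k
  have lap: "frac_lap \<alpha> k x = - (ereal d * I k)" for k
    unfolding frac_lap_def d_def I_def by (rule ereal_mult_minus_left)
  have "I g \<le> ereal c * I h"
    unfolding I_def using assms(3-5) by (rule nn_integral_pos_neg_le_cmult)
  then have "ereal d * I g \<le> ereal d * (ereal c * I h)"
    using frac_const_nonneg[OF assms(1,2)] by (intro ereal_mult_left_mono) (auto simp: d_def)
  then show ?thesis
    unfolding lap by (simp add: ereal_mult_minus_right mult.left_commute)
qed

theorem proposition3p15:
  fixes f :: "'a::euclidean_space \<Rightarrow> real"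
    and \<Lambda> :: "'a set"
    and \<alpha> \<tau>1 \<tau>2 K q :: real
    and x :: 'a
  assumes "0 < \<alpha>" and "\<alpha> < 1"
    and "0 < \<tau>1" and "\<tau>1 < \<tau>2"
    and "closed \<Lambda>" and "\<Lambda> \<in> null_sets lborel"
    and "f \<in> L2alpha \<alpha>"
    and "smooth_on (- \<Lambda>) f"
    and "f \<in> Lloc \<tau>2"
    and "K > 0" and "q > 0"
    and "\<And>y. y \<notin> \<Lambda> \<Longrightarrow>
           (1 / K) * infdist y \<Lambda> powr (- q) \<le> f y \<and> f y \<le> K * infdist y \<Lambda> powr (- q)"
    and "x \<notin> \<Lambda>"
  shows "frac_lap \<alpha> (\<lambda>y. f y powr \<tau>1) x \<ge>
           ereal (\<tau>1 / \<tau>2 * f x powr (\<tau>1 - \<tau>2)) * frac_lap \<alpha> (\<lambda>y. f y powr \<tau>2) x"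
proof (rule frac_lap_ge_cmult[OF assms(1,2)])
  show "0 \<le> \<tau>1 / \<tau>2 * f x powr (\<tau>1 - \<tau>2)"
    using assms(3,4) by simp
  have [measurable]: "f \<in> borel_measurable lborel"
    using assms(7) by (simp add: L2alpha_def)
  show "frac_integrand \<alpha> (\<lambda>y. f y powr \<tau>2) x \<in> borel_measurable lborel"
    unfolding frac_integrand_def by measurable
  fix y
  show "frac_integrand \<alpha> (\<lambda>y. f y powr \<tau>1) x y
      \<le> \<tau>1 / \<tau>2 * f x powr (\<tau>1 - \<tau>2) * frac_integrand \<alpha> (\<lambda>y. f y powr \<tau>2) x y"
  proof (cases "\<Lambda> = {}")
    case True
    \<comment> \<open>\<open>infdist y {} = 0\<close> and \<open>0 powr -q = 0\<close>, so the two-sided bound forces \<open>f = 0\<close>.\<close>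
    then have "f = (\<lambda>_. 0)"
      using assms(12) by (auto simp: infdist_def fun_eq_iff intro: order.antisym)
    then show ?thesis
      by (simp add: frac_integrand_def)
  next
    case False
    with assms(5,13) have "0 < infdist x \<Lambda>"
      by (intro infdist_pos_not_in_closed)
    then have "0 < f x"
      using assms(12)[OF assms(13)] assms(10)
      by (smt (verit) divide_pos_pos mult_pos_pos powr_gt_zero)
    then show ?thesis
      using assms(3,4) by (rule frac_integrand_powr_le[rotated -1])
  qed
qed

end
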